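(* Over $R=\mathbb{F}_2$ with $F=\hat{\mathbb{G}}_a$ and $G=\hat{\mathbb{G}}_m$, let $i\ne j$. In order for the class $c\,a_ia_j$ (with coefficient $c$) to extend to a multiplicative cocycle, it is necessary that $c^2=0$.
   Context: $\hat{\mathbb{G}}_a$ is the formal group law $x+y$ and $\hat{\mathbb{G}}_m$ is $x+y+xy$. The Lubin–Tate cohomology $H^*(F;G)(R)$ is the cohomology of the complex of power series $F^{\times n}\to G$ with the alternating coboundary built from the group laws. Filtering by leading total degree gives the tangent spectral sequence $H^*(\hat{\mathbb{G}}_a;\hat{\mathbb{G}}_a)(R)\Rightarrow H^*(\hat{\mathbb{G}}_a;\hat{\mathbb{G}}_m)(R)$; "extending to a multiplicative cocycle" means being the leading (lowest-degree homogeneous) additive part of a multiplicative cocycle, i.e. surviving this spectral sequence. Over $\mathbb{F}_2$, $a_i\in H^1(\hat{\mathbb{G}}_a;\hat{\mathbb{G}}_a)$ is the class of $x^{2^i}$ and $a_ia_j\in H^2$ is the class of $x^{2^i}y^{2^j}$. *)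

theory Defs
  imports Main "HOL-Library.Z2"
begin

text \<open>Formal power series in 2 (resp. 3) variables over a commutative ring,
  represented by their coefficient functions: f a b is the coefficient of
  x^a y^b, and g a b c the coefficient of x^a y^b z^c.\<close>

type_synonym 'r ps2 = "nat \<Rightarrow> nat \<Rightarrow> 'r"
type_synonym 'r ps3 = "nat \<Rightarrow> nat \<Rightarrow> nat \<Rightarrow> 'r"

definition ps3_mult :: "'r::comm_ring_1 ps3 \<Rightarrow> 'r ps3 \<Rightarrow> 'r ps3" where
  "ps3_mult g h = (\<lambda>a b c. \<Sum>a'\<le>a. \<Sum>b'\<le>b. \<Sum>c'\<le>c.
      g a' b' c' * h (a - a') (b - b') (c - c'))"

text \<open>The multiplicative formal group law x +_G y = x + y + xy on 3-variable series.\<close>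
definition gm_add3 :: "'r::comm_ring_1 ps3 \<Rightarrow> 'r ps3 \<Rightarrow> 'r ps3" where
  "gm_add3 g h = (\<lambda>a b c. g a b c + h a b c + ps3_mult g h a b c)"

text \<open>Substitutions (F is the additive formal group, so x +_F y = x + y).\<close>
definition sub_yz :: "'r::comm_ring_1 ps2 \<Rightarrow> 'r ps3" where
  "sub_yz f = (\<lambda>a b c. if a = 0 then f b c else 0)"
definition sub_xy_z :: "'r::comm_ring_1 ps2 \<Rightarrow> 'r ps3" where  \<comment> \<open>f(x+y,z)\<close>
  "sub_xy_z f = (\<lambda>a b c. of_nat ((a + b) choose a) * f (a + b) c)"
definition sub_x_yz :: "'r::comm_ring_1 ps2 \<Rightarrow> 'r ps3" where  \<comment> \<open>f(x,y+z)\<close>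
  "sub_x_yz f = (\<lambda>a b c. of_nat ((b + c) choose b) * f a (b + c))"
definition sub_xy :: "'r::comm_ring_1 ps2 \<Rightarrow> 'r ps3" where
  "sub_xy f = (\<lambda>a b c. if c = 0 then f a b else 0)"

text \<open>A 2-cocycle in the Lubin-Tate complex for F = additive, G = multiplicative:
  a power series f(x,y) without constant term with
  f(y,z) -_G f(x+y,z) +_G f(x,y+z) -_G f(x,y) = 0, equivalently (G abelian)
  f(y,z) +_G f(x,y+z) = f(x+y,z) +_G f(x,y).\<close>
definition Ga_Gm_cocycle2 :: "'r::comm_ring_1 ps2 \<Rightarrow> bool" where
  "Ga_Gm_cocycle2 f \<longleftrightarrow> f 0 0 = 0 \<and>
     gm_add3 (sub_yz f) (sub_x_yz f) = gm_add3 (sub_xy_z f) (sub_xy f)"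

text \<open>Additive coboundary of the 1-cochain e x^d: e (y^d - (x+y)^d + x^d).\<close>
definition add_cobdry_monom :: "'r::comm_ring_1 \<Rightarrow> nat \<Rightarrow> 'r ps2" where
  "add_cobdry_monom e d = (\<lambda>a b. if a + b = d then
      e * (of_bool (a = 0) - of_nat (d choose a) + of_bool (b = 0)) else 0)"

text \<open>The additive class c a_i a_j (represented by c x^(2^i) y^(2^j), up to additive
  coboundaries in the same degree) extends to a multiplicative cocycle: there is a
  multiplicative cocycle whose lowest-degree homogeneous part represents this class.\<close>
definition extends_to_mult_cocycle :: "'r::comm_ring_1 \<Rightarrow> nat \<Rightarrow> nat \<Rightarrow> bool" where
  "extends_to_mult_cocycle c i j \<longleftrightarrow>
     (\<exists>f e. Ga_Gm_cocycle2 f \<and>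
        (\<forall>a b. a + b < 2^i + 2^j \<longrightarrow> f a b = 0) \<and>
        (\<forall>a b. a + b = 2^i + 2^j \<longrightarrow>
           f a b = c * of_bool (a = 2^i \<and> b = 2^j) + add_cobdry_monom e (2^i + 2^j) a b))"

end

theory Submission
  imports Defs "HOL-Computational_Algebra.Polynomial"
begin

text \<open>The argument works over any commutative ring with \<open>2 = 0\<close>. Modulo additive coboundaries,
  the lowest-degree part of the cocycle is \<open>\<alpha> x\<^sup>A y\<^sup>B + \<beta> x\<^sup>B y\<^sup>A\<close> with
  \<open>A = 2\<^sup>i\<close>, \<open>B = 2\<^sup>j\<close>, \<open>\<alpha> = c + e\<close> and \<open>\<beta> = e\<close>. In twice that degree the cocycle equation
  says that the quadratic term \<open>f(y,z) f(x,y+z) - f(x+y,z) f(x,y)\<close>, which only sees the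
  leading part, is the additive coboundary of the next unknown part of \<open>f\<close>. Comparing the
  coefficients of \<open>x\<^sup>A y\<^sup>A z\<^sup>2\<^sup>B\<close>, \<open>x\<^sup>A y\<^sup>2\<^sup>B z\<^sup>A\<close> and \<open>x\<^sup>2\<^sup>B y\<^sup>A z\<^sup>A\<close>, where by Lucas'
  theorem \<open>(A + 2B choose A)\<close> is odd and \<open>(2A choose A)\<close> is even, eliminates the unknowns and
  leaves \<open>\<alpha>\<^sup>2 = \<beta>\<^sup>2\<close>, i.e. \<open>c\<^sup>2 = (c + e)\<^sup>2 - e\<^sup>2 = 0\<close>. This needs \<open>A \<noteq> 2B\<close>; otherwise
  the roles of \<open>i\<close> and \<open>j\<close> are exchanged.\<close>

lemma of_nat_eq_of_bool_odd:
  assumes "(2::'r::comm_ring_1) = 0"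
  shows "(of_nat n :: 'r) = of_bool (odd n)"
proof -
  have "(of_nat n :: 'r) = 2 * of_nat (n div 2) + of_nat (n mod 2)"
    by (metis of_nat_add of_nat_mult of_nat_numeral div_mult_mod_eq mult.commute)
  then show ?thesis
    using assms by (cases "even n") (simp_all add: odd_iff_mod_2_eq_one)
qed

lemma power2_add_char_two:
  assumes "(2::'r::comm_ring_1) = 0"
  shows "(x + y) ^ 2 = x ^ 2 + (y::'r) ^ 2"
  using assms by (simp add: power2_sum)

lemma of_nat_choose_eq_coeff: "(of_nat (n choose k) :: bit) = coeff ([:1, 1:] ^ n) k"
proof (cases "k \<le> n")
  case True
  then show ?thesis by (simp add: coeff_linear_poly_power)
next
  case False
  then show ?thesis
    by (simp add: coeff_eq_0 binomial_eq_0 degree_linear_power order.strict_trans1)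
qed

lemma linear_power_two_power: "([:1, 1:] :: bit poly) ^ (2 ^ m) = 1 + monom 1 (2 ^ m)"
proof (induction m)
  case 0
  then show ?case by (simp add: monom_Suc one_pCons)
next
  case (Suc m)
  have char_two: "(2::bit poly) = 0"
    using numeral_poly[where n = "num.Bit0 num.One" and 'a = bit] by simp
  have "([:1, 1:] :: bit poly) ^ (2 ^ Suc m) = (1 + monom 1 (2 ^ m)) ^ 2"
    by (simp add: power_mult[symmetric] mult.commute Suc.IH[symmetric])
  also have "\<dots> = 1 + monom 1 (2 ^ m) ^ 2"
    by (simp add: power2_add_char_two[OF char_two])
  also have "\<dots> = 1 + monom 1 (2 ^ Suc m)"
    by (simp add: power2_eq_square mult_monom mult_2)
  finally show ?case .
qed

lemma odd_choose_two_power_iff: "odd (2 ^ m choose k) \<longleftrightarrow> k = 0 \<or> k = 2 ^ m"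
proof -
  have "(of_bool (odd (2 ^ m choose k)) :: bit) = of_bool (k = 0) + of_bool (k = 2 ^ m)"
    by (simp add: of_nat_eq_of_bool_odd[symmetric] of_nat_choose_eq_coeff linear_power_two_power)
  then show ?thesis by auto
qed

lemma odd_choose_add_two_powers_iff:
  assumes "m \<noteq> n"
  shows "odd ((2 ^ m + 2 ^ n) choose k)
    \<longleftrightarrow> k = 0 \<or> k = 2 ^ m \<or> k = 2 ^ n \<or> k = 2 ^ m + 2 ^ n"
proof -
  have "([:1, 1:] :: bit poly) ^ (2 ^ m + 2 ^ n) = (1 + monom 1 (2 ^ m)) * (1 + monom 1 (2 ^ n))"
    by (simp add: power_add linear_power_two_power)
  also have "\<dots> = 1 + monom 1 (2 ^ m) + monom 1 (2 ^ n) + monom 1 (2 ^ m + 2 ^ n)"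
    by (simp add: algebra_simps mult_monom)
  finally have "(of_bool (odd ((2 ^ m + 2 ^ n) choose k)) :: bit)
      = of_bool (k = 0) + of_bool (k = 2 ^ m) + of_bool (k = 2 ^ n) + of_bool (k = 2 ^ m + 2 ^ n)"
    by (simp add: of_nat_eq_of_bool_odd[symmetric] of_nat_choose_eq_coeff)
  moreover have "(2::nat) ^ m \<noteq> 2 ^ n"
    using assms by simp
  ultimately show ?thesis by auto
qed

lemma Ga_Gm_cocycle2_coeff:
  assumes "Ga_Gm_cocycle2 f" and "0 < p" and "0 < r"
  shows "of_nat ((q + r) choose q) * f p (q + r) + ps3_mult (sub_yz f) (sub_x_yz f) p q r
       = of_nat ((p + q) choose p) * f (p + q) r + ps3_mult (sub_xy_z f) (sub_xy f) p q r"
proof -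
  have "gm_add3 (sub_yz f) (sub_x_yz f) p q r = gm_add3 (sub_xy_z f) (sub_xy f) p q r"
    using assms(1) unfolding Ga_Gm_cocycle2_def by simp
  then show ?thesis
    using assms(2,3) by (simp add: gm_add3_def sub_yz_def sub_x_yz_def sub_xy_z_def sub_xy_def)
qed

lemma ps3_mult_sub_yz:
  "ps3_mult (sub_yz g) h p q r = (\<Sum>b\<le>q. \<Sum>c\<le>r. g b c * h p (q - b) (r - c))"
proof -
  have "ps3_mult (sub_yz g) h p q r
      = (\<Sum>a\<le>p. if a = 0 then (\<Sum>b\<le>q. \<Sum>c\<le>r. g b c * h p (q - b) (r - c)) else 0)"
    unfolding ps3_mult_def sub_yz_def by (intro sum.cong) auto
  then show ?thesis
    by simp
qed

lemma ps3_mult_sub_xy: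
  "ps3_mult g (sub_xy h) p q r = (\<Sum>a\<le>p. \<Sum>b\<le>q. g a b r * h (p - a) (q - b))"
proof -
  have "g a b c * sub_xy h a' b' (r - c) = (if c = r then g a b r * h a' b' else 0)" if "c \<le> r"
    for a b c a' b'
    using that by (simp add: sub_xy_def)
  then show ?thesis
    by (simp add: ps3_mult_def)
qed

lemma mult_in_double_degree:
  fixes f :: "'r::comm_ring_1 ps2"
  assumes vanish: "\<And>a b. a + b < d \<Longrightarrow> f a b = 0"
    and leading: "\<And>a b. a + b = d \<Longrightarrow> f a b = g a"
    and "a + b + a' + b' = 2 * d"
  shows "f a b * f a' b' = (if a + b = d then g a * g a' else 0)"
proof (cases "a + b" d rule: linorder_cases)
  case greater
  then have "a' + b' < d" using assms(3) by linarith
  then show ?thesis using greater vanish by simp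
next
  case equal
  then have "a' + b' = d" using assms(3) by linarith
  then show ?thesis using equal leading by simp
qed (simp add: vanish)

lemma ps3_mult_sub_yz_sub_x_yz_double_degree:
  fixes f :: "'r::comm_ring_1 ps2"
  assumes vanish: "\<And>a b. a + b < d \<Longrightarrow> f a b = 0"
    and leading: "\<And>a b. a + b = d \<Longrightarrow> f a b = g a"
    and total: "p + q + r = 2 * d"
  shows "ps3_mult (sub_yz f) (sub_x_yz f) p q r
       = (\<Sum>b\<le>q. if b \<le> d \<and> d \<le> b + r
            then g b * of_nat ((q + r - d) choose (q - b)) else 0) * g p"
proof -
  let ?T = "\<lambda>b. g b * of_nat ((q + r - d) choose (q - b)) * g p"
  have summand: "f b c * sub_x_yz f p (q - b) (r - c) = (if c = d - b \<and> b \<le> d then ?T b else 0)"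
    if "b \<le> q" "c \<le> r" for b c
  proof -
    have "f b c * sub_x_yz f p (q - b) (r - c)
        = of_nat ((q - b + (r - c)) choose (q - b)) * (f b c * f p (q - b + (r - c)))"
      by (simp add: sub_x_yz_def)
    also have "\<dots> = (if c = d - b \<and> b \<le> d then ?T b else 0)"
      using mult_in_double_degree[where f = f and d = d and g = g and a = b and b = c and a' = p
          and b' = "q - b + (r - c)", OF vanish leading] that total
      by (auto simp: algebra_simps)
    finally show ?thesis .
  qed
  have "ps3_mult (sub_yz f) (sub_x_yz f) p q r
      = (\<Sum>b\<le>q. \<Sum>c\<le>r. if c = d - b \<and> b \<le> d then ?T b else 0)"
    unfolding ps3_mult_sub_yz by (intro sum.cong refl) (simp add: summand)
  also have "\<dots> = (\<Sum>b\<le>q. if b \<le> d \<and> d \<le> b + r then ?T b else 0)"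
    by (intro sum.cong refl) (cases "b \<le> d"; auto)
  finally show ?thesis
    unfolding sum_distrib_right by (simp add: if_distrib[of "\<lambda>x. x * _"] cong: if_cong)
qed

lemma ps3_mult_sub_xy_z_sub_xy_double_degree:
  fixes f :: "'r::comm_ring_1 ps2"
  assumes vanish: "\<And>a b. a + b < d \<Longrightarrow> f a b = 0"
    and leading: "\<And>a b. a + b = d \<Longrightarrow> f a b = g a"
    and total: "p + q + r = 2 * d"
  shows "ps3_mult (sub_xy_z f) (sub_xy f) p q r
       = (\<Sum>a\<le>p. (if a + r \<le> d \<and> d \<le> a + r + q
            then of_nat ((d - r) choose a) * g (d - r) else 0) * g (p - a))"
proof -
  let ?T = "\<lambda>a. of_nat ((d - r) choose a) * g (d - r) * g (p - a)"
  have summand: "sub_xy_z f a b r * f (p - a) (q - b) = (if b = d - r - a \<and> a + r \<le> d then ?T a else 0)"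
    if "a \<le> p" "b \<le> q" for a b
  proof -
    have "sub_xy_z f a b r * f (p - a) (q - b)
        = of_nat ((a + b) choose a) * (f (a + b) r * f (p - a) (q - b))"
      by (simp add: sub_xy_z_def)
    also have "\<dots> = (if b = d - r - a \<and> a + r \<le> d then ?T a else 0)"
      using mult_in_double_degree[where f = f and d = d and g = g and a = "a + b" and b = r
          and a' = "p - a" and b' = "q - b", OF vanish leading] that total
      by (auto simp: algebra_simps)
    finally show ?thesis .
  qed
  have "ps3_mult (sub_xy_z f) (sub_xy f) p q r
      = (\<Sum>a\<le>p. \<Sum>b\<le>q. if b = d - r - a \<and> a + r \<le> d then ?T a else 0)"
    unfolding ps3_mult_sub_xy by (intro sum.cong refl) (simp add: summand)
  also have "\<dots> = (\<Sum>a\<le>p. if a + r \<le> d \<and> d \<le> a + r + q then ?T a else 0)"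
    by (intro sum.cong refl) (cases "a + r \<le> d"; auto)
  finally show ?thesis
    by (simp add: if_distrib[of "\<lambda>x. x * _"] cong: if_cong)
qed

lemma sum_atMost_two_point_support:
  fixes F :: "nat \<Rightarrow> 'a::comm_monoid_add"
  assumes "A \<noteq> B" and "\<And>x. x \<noteq> A \<Longrightarrow> x \<noteq> B \<Longrightarrow> F x = 0"
  shows "(\<Sum>x\<le>n. F x) = (if A \<le> n then F A else 0) + (if B \<le> n then F B else 0)"
proof -
  have "(\<Sum>x\<le>n. F x) = (\<Sum>x\<in>{..n} \<inter> {A, B}. F x)"
    by (rule sum.mono_neutral_right) (use assms(2) in auto)
  then show ?thesis
    using assms(1) by (auto simp: Int_insert_right)
qed

lemma sum_atMost_convolution_two_point_support:
  fixes F g :: "nat \<Rightarrow> 'a::comm_semiring_0"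
  assumes "A \<noteq> B" and "\<And>x. x \<noteq> A \<Longrightarrow> x \<noteq> B \<Longrightarrow> g x = 0"
  shows "(\<Sum>a\<le>n. F a * g (n - a))
       = (if A \<le> n then F (n - A) * g A else 0) + (if B \<le> n then F (n - B) * g B else 0)"
proof -
  have "(\<Sum>a\<le>n. F a * g (n - a)) = (\<Sum>a\<le>n. F (n - a) * g a)"
    unfolding atMost_atLeast0
    by (subst sum.atLeastAtMost_rev) (auto intro!: sum.cong)
  also have "\<dots> = (if A \<le> n then F (n - A) * g A else 0) + (if B \<le> n then F (n - B) * g B else 0)"
    by (rule sum_atMost_two_point_support) (use assms in auto)
  finally show ?thesis .
qed

locale Ga_Gm_cocycle2_leading =
  fixes f :: "'r::comm_ring_1 ps2" and i j :: nat and \<alpha> \<beta> :: 'r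
  assumes char_two: "(2::'r) = 0"
    and cocycle: "Ga_Gm_cocycle2 f"
    and exponents: "i \<noteq> j" "i \<noteq> Suc j"
    and vanish: "\<And>a b. a + b < 2 ^ i + 2 ^ j \<Longrightarrow> f a b = 0"
    and leading: "\<And>a b. a + b = 2 ^ i + 2 ^ j \<Longrightarrow>
      f a b = (if a = 2 ^ i then \<alpha> else if a = 2 ^ j then \<beta> else 0)"
begin

abbreviation A :: nat where "A \<equiv> 2 ^ i"
abbreviation B :: nat where "B \<equiv> 2 ^ j"

definition lead :: "nat \<Rightarrow> 'r" where
  "lead a = (if a = A then \<alpha> else if a = B then \<beta> else 0)"

lemma f_eq_lead: "a + b = A + B \<Longrightarrow> f a b = lead a"
  by (simp add: leading lead_def)

lemma lead_eq_0: "a \<noteq> A \<Longrightarrow> a \<noteq> B \<Longrightarrow> lead a = 0"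
  by (simp add: lead_def)

lemma two_powers_pos: "0 < A" "0 < B"
  by simp_all

lemma A_neq_B: "A \<noteq> B"
  using exponents by simp

lemma A_neq_double_B: "A \<noteq> 2 * B"
  using exponents power_inject_exp[of 2 i "Suc j"] by simp

lemma double_B_le_A: "B < A \<Longrightarrow> 2 * B \<le> A"
  using power_increasing[of "Suc j" i "2::nat"] by simp

lemma of_nat_A_plus_double_B_choose_A: "of_nat ((A + 2 * B) choose A) = (1::'r)"
  using odd_choose_add_two_powers_iff[of i "Suc j" A] exponents
  by (simp add: of_nat_eq_of_bool_odd[OF char_two])

lemma of_nat_A_plus_double_B_choose_double_B: "of_nat ((A + 2 * B) choose (2 * B)) = (1::'r)"
  using odd_choose_add_two_powers_iff[of "Suc j" i "2 * B"] exponents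
  by (simp add: of_nat_eq_of_bool_odd[OF char_two] add.commute)

lemma of_nat_double_A_choose_A: "of_nat ((A + A) choose A) = (0::'r)"
  using odd_choose_two_power_iff[of "Suc i" A]
  by (simp add: of_nat_eq_of_bool_odd[OF char_two] mult_2)

lemma coeff_A_A_double_B: "f A (A + 2 * B) + \<alpha> ^ 2 = 0"
proof -
  have total: "A + A + 2 * B = 2 * (A + B)" by simp
  have "ps3_mult (sub_yz f) (sub_x_yz f) A A (2 * B)
      = (\<Sum>b\<le>A. if b \<le> A + B \<and> A + B \<le> b + 2 * B
           then lead b * of_nat ((A + 2 * B - (A + B)) choose (A - b)) else 0) * lead A"
    by (rule ps3_mult_sub_yz_sub_x_yz_double_degree[OF vanish f_eq_lead total])
  also have "\<dots> = \<alpha> ^ 2"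
    using A_neq_B A_neq_double_B double_B_le_A
    by (subst sum_atMost_two_point_support[OF A_neq_B]) (auto simp: lead_def power2_eq_square)
  finally have yz: "ps3_mult (sub_yz f) (sub_x_yz f) A A (2 * B) = \<alpha> ^ 2" .
  have "ps3_mult (sub_xy_z f) (sub_xy f) A A (2 * B)
      = (\<Sum>a\<le>A. (if a + 2 * B \<le> A + B \<and> A + B \<le> a + 2 * B + A
           then of_nat ((A + B - 2 * B) choose a) * lead (A + B - 2 * B) else 0) * lead (A - a))"
    by (rule ps3_mult_sub_xy_z_sub_xy_double_degree[OF vanish f_eq_lead total])
  also have "\<dots> = 0"
  proof -
    have "lead (A + B - 2 * B) = 0"
      using A_neq_double_B two_powers_pos by (intro lead_eq_0) linarith+
    then show ?thesis
      by (simp only: mult_zero_right mult_zero_left if_cancel sum.neutral_const)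
  qed
  finally have xy_z: "ps3_mult (sub_xy_z f) (sub_xy f) A A (2 * B) = 0" .
  show ?thesis
    using Ga_Gm_cocycle2_coeff[OF cocycle, where p = A and q = A and r = "2 * B"] yz xy_z
    by (simp add: of_nat_A_plus_double_B_choose_A of_nat_double_A_choose_A)
qed

lemma coeff_A_double_B_A: "f A (A + 2 * B) = f (A + 2 * B) A"
proof -
  have total: "A + 2 * B + A = 2 * (A + B)" by simp
  have "ps3_mult (sub_yz f) (sub_x_yz f) A (2 * B) A
      = (\<Sum>b\<le>2 * B. if b \<le> A + B \<and> A + B \<le> b + A
           then lead b * of_nat ((2 * B + A - (A + B)) choose (2 * B - b)) else 0) * lead A"
    by (rule ps3_mult_sub_yz_sub_x_yz_double_degree[OF vanish f_eq_lead total])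
  also have "\<dots> = \<beta> * \<alpha>"
    using A_neq_B A_neq_double_B double_B_le_A
    by (subst sum_atMost_two_point_support[OF A_neq_B]) (auto simp: lead_def)
  finally have yz: "ps3_mult (sub_yz f) (sub_x_yz f) A (2 * B) A = \<beta> * \<alpha>" .
  have "ps3_mult (sub_xy_z f) (sub_xy f) A (2 * B) A
      = (\<Sum>a\<le>A. (if a + A \<le> A + B \<and> A + B \<le> a + A + 2 * B
           then of_nat ((A + B - A) choose a) * lead (A + B - A) else 0) * lead (A - a))"
    by (rule ps3_mult_sub_xy_z_sub_xy_double_degree[OF vanish f_eq_lead total])
  also have "\<dots> = \<beta> * \<alpha>"
    using A_neq_B A_neq_double_B double_B_le_A
    by (subst sum_atMost_convolution_two_point_support[OF A_neq_B lead_eq_0]) (auto simp: lead_def)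
  finally have xy_z: "ps3_mult (sub_xy_z f) (sub_xy f) A (2 * B) A = \<beta> * \<alpha>" .
  show ?thesis
    using Ga_Gm_cocycle2_coeff[OF cocycle, where p = A and q = "2 * B" and r = A] yz xy_z
    by (simp add: of_nat_A_plus_double_B_choose_A of_nat_A_plus_double_B_choose_double_B
        add.commute)
qed

lemma coeff_double_B_A_A: "f (A + 2 * B) A + \<beta> ^ 2 = 0"
proof -
  have total: "2 * B + A + A = 2 * (A + B)" by simp
  have "lead (2 * B) = 0"
    using A_neq_double_B by (intro lead_eq_0) simp_all
  then have yz: "ps3_mult (sub_yz f) (sub_x_yz f) (2 * B) A A = 0"
    by (simp add: ps3_mult_sub_yz_sub_x_yz_double_degree[OF vanish f_eq_lead total])
  have "ps3_mult (sub_xy_z f) (sub_xy f) (2 * B) A A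
      = (\<Sum>a\<le>2 * B. (if a + A \<le> A + B \<and> A + B \<le> a + A + A
           then of_nat ((A + B - A) choose a) * lead (A + B - A) else 0) * lead (2 * B - a))"
    by (rule ps3_mult_sub_xy_z_sub_xy_double_degree[OF vanish f_eq_lead total])
  also have "\<dots> = \<beta> ^ 2"
    using A_neq_B A_neq_double_B double_B_le_A
    by (subst sum_atMost_convolution_two_point_support[OF A_neq_B lead_eq_0])
      (auto simp: lead_def power2_eq_square)
  finally have xy_z: "ps3_mult (sub_xy_z f) (sub_xy f) (2 * B) A A = \<beta> ^ 2" .
  show ?thesis
    using Ga_Gm_cocycle2_coeff[OF cocycle, where p = "2 * B" and q = A and r = A] yz xy_z
    by (simp add: of_nat_A_plus_double_B_choose_double_B of_nat_double_A_choose_A add.commute)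
qed

theorem leading_coeffs_square_eq: "\<alpha> ^ 2 = \<beta> ^ 2"
proof -
  have "\<alpha> ^ 2 = - f A (A + 2 * B)"
    using coeff_A_A_double_B by (metis add_eq_0_iff)
  also have "\<dots> = - f (A + 2 * B) A"
    by (simp add: coeff_A_double_B_A)
  also have "\<dots> = \<beta> ^ 2"
    using coeff_double_B_A_A by (metis add_eq_0_iff)
  finally show ?thesis .
qed

end

lemma add_cobdry_monom_two_powers:
  fixes e :: "'r::comm_ring_1"
  assumes char_two: "(2::'r) = 0" and "i \<noteq> j" and degree: "a + b = 2 ^ i + 2 ^ j"
  shows "add_cobdry_monom e (2 ^ i + 2 ^ j) a b = (if a = 2 ^ i \<or> a = 2 ^ j then e else 0)"
proof -
  have "1 + 1 = (0::'r)"
    using char_two by simp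
  then have minus_one: "- 1 = (1::'r)"
    by (metis add_eq_0_iff)
  have binomial: "of_nat ((2 ^ i + 2 ^ j) choose a)
      = (of_bool (a = 0 \<or> a = 2 ^ i \<or> a = 2 ^ j \<or> a = 2 ^ i + 2 ^ j) :: 'r)"
    using odd_choose_add_two_powers_iff[OF assms(2)]
    by (simp add: of_nat_eq_of_bool_odd[OF char_two])
  have "(2::nat) ^ i \<noteq> 2 ^ j"
    using assms(2) by simp
  then consider "a = 2 ^ i" "b = 2 ^ j" | "a = 2 ^ j" "b = 2 ^ i" | "a \<noteq> 2 ^ i" "a \<noteq> 2 ^ j"
    using degree by force
  then show ?thesis
  proof cases
    case 1
    then show ?thesis using binomial minus_one by (simp add: add_cobdry_monom_def)
  next
    case 2
    then show ?thesis using binomial minus_one by (simp add: add_cobdry_monom_def)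
  next
    case 3
    then show ?thesis using binomial degree by (simp add: add_cobdry_monom_def)
  qed
qed

theorem extends_to_mult_cocycle_square_eq_0:
  fixes c :: "'r::comm_ring_1"
  assumes char_two: "(2::'r) = 0" and "i \<noteq> j" and "extends_to_mult_cocycle c i j"
  shows "c ^ 2 = 0"
proof -
  obtain f e where cocycle: "Ga_Gm_cocycle2 f"
    and vanish: "\<And>a b. a + b < 2 ^ i + 2 ^ j \<Longrightarrow> f a b = 0"
    and leading: "\<And>a b. a + b = 2 ^ i + 2 ^ j \<Longrightarrow>
      f a b = c * of_bool (a = 2 ^ i \<and> b = 2 ^ j) + add_cobdry_monom e (2 ^ i + 2 ^ j) a b"
    using assms(3) unfolding extends_to_mult_cocycle_def by blast
  have powers_neq: "(2::nat) ^ i \<noteq> 2 ^ j"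
    using assms(2) by simp
  then have leading_part: "f a b = (if a = 2 ^ i then c + e else if a = 2 ^ j then e else 0)"
    if "a + b = 2 ^ i + 2 ^ j" for a b
    using leading[OF that] add_cobdry_monom_two_powers[OF char_two assms(2) that] that by auto
  have "(c + e) ^ 2 = e ^ 2"
  proof (cases "i = Suc j")
    case False
    interpret Ga_Gm_cocycle2_leading f i j "c + e" e
      using char_two cocycle assms(2) False vanish leading_part by unfold_locales
    show ?thesis by (rule leading_coeffs_square_eq)
  next
    case True
    interpret Ga_Gm_cocycle2_leading f j i e "c + e"
    proof
      show "j \<noteq> i" "j \<noteq> Suc i"
        using assms(2) True by simp_all
      show "f a b = 0" if "a + b < 2 ^ j + 2 ^ i" for a b
        using vanish that by (simp add: add.commute)
      show "f a b = (if a = 2 ^ j then e else if a = 2 ^ i then c + e else 0)"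
        if "a + b = 2 ^ j + 2 ^ i" for a b
        using leading_part[of a b] that powers_neq by (simp add: add.commute)
    qed (fact char_two cocycle)+
    show ?thesis by (rule leading_coeffs_square_eq[symmetric])
  qed
  then show ?thesis
    using power2_add_char_two[OF char_two] by simp
qed

theorem mainTheorem6:
  fixes c :: bit and i j :: nat
  assumes "i \<noteq> j"
    and "extends_to_mult_cocycle c i j"
  shows "c ^ 2 = 0"
  using extends_to_mult_cocycle_square_eq_0[OF bit_2_eq_0 assms] .

end
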